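(* Let $G=(V,E)$ be a finite graph of maximum degree $\Delta$ with no isolated vertices and adjacency matrix $A$. Let $b\in\{0\}\cup[1,\infty)$, $c(0)=0.109597$, $c(b)=0.0896883/b$ for $b\ge1$, and $0<\lambda<c(b)/\Delta$. Define, for $u\in V$, $D_u=d_u(1+\lambda)^b\log(1+\lambda)$, $\beta_u=\frac{1+\lambda}{\lambda}\frac{D_u}{W(D_u)(1+W(D_u))}$, $\gamma_u=\frac{1+\lambda}{\lambda}\frac{D_u}{d_u(1+W(D_u))}$, and $B=\mathrm{diag}(\boldsymbol\beta)$, $\Gamma=\mathrm{diag}(\boldsymbol\gamma)$. Then every $\mathbf x\in\mathbb R^V$ with $\mathbf x\ge\mathbf 0$ and $(B+\Gamma A)\mathbf x\ge\mathbf 1$ satisfies \[ \sum_{u\in V}x_u\ \ge\ \sum_{u\in V}\frac{1}{\beta_u+d_u\gamma_u}. \]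
   Context: $d_u$ denotes the degree of $u$; $W:(0,\infty)\to(0,\infty)$ is the principal branch of the Lambert $W$-function (inverse of $x\mapsto xe^x$). Vector inequalities are entrywise. *)

theory Defs
  imports "HOL-Analysis.Analysis"
begin

definition lambertW :: "real \<Rightarrow> real" where
  "lambertW y = (THE w. w > 0 \<and> w * exp w = y)"

definition simple_graph :: "'a set \<Rightarrow> ('a \<Rightarrow> 'a \<Rightarrow> bool) \<Rightarrow> bool" where
  "simple_graph V E \<longleftrightarrow> finite V \<and> (\<forall>u v. E u v \<longrightarrow> u \<in> V \<and> v \<in> V)
     \<and> (\<forall>u v. E u v \<longrightarrow> E v u) \<and> (\<forall>u. \<not> E u u)"

definition degree :: "'a set \<Rightarrow> ('a \<Rightarrow> 'a \<Rightarrow> bool) \<Rightarrow> 'a \<Rightarrow> nat" where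
  "degree V E u = card {v \<in> V. E u v}"

definition max_degree :: "'a set \<Rightarrow> ('a \<Rightarrow> 'a \<Rightarrow> bool) \<Rightarrow> nat" where
  "max_degree V E = Max (degree V E ` V)"

definition adj :: "('a \<Rightarrow> 'a \<Rightarrow> bool) \<Rightarrow> 'a \<Rightarrow> 'a \<Rightarrow> real" where
  "adj E u v = (if E u v then 1 else 0)"

definition cconst :: "real \<Rightarrow> real" where
  "cconst b = (if b = 0 then 0.109597 else 0.0896883 / b)"

definition Dval :: "real \<Rightarrow> real \<Rightarrow> nat \<Rightarrow> real" where
  "Dval b lam d = real d * (1 + lam) powr b * ln (1 + lam)"

definition betaval :: "real \<Rightarrow> real \<Rightarrow> nat \<Rightarrow> real" where
  "betaval b lam d = (1 + lam) / lam *
     (Dval b lam d / (lambertW (Dval b lam d) * (1 + lambertW (Dval b lam d))))"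

definition gammaval :: "real \<Rightarrow> real \<Rightarrow> nat \<Rightarrow> real" where
  "gammaval b lam d = (1 + lam) / lam *
     (Dval b lam d / (real d * (1 + lambertW (Dval b lam d))))"

end

theory Submission
  imports Defs
begin

(* Write a = (1+lam)^b ln(1+lam), k = (1+lam)/lam and w_u = W(a d_u).  Then
   beta_u = k e^(w_u)/(1+w_u), gamma_u = k a/(1+w_u) and 1/(beta_u + d_u gamma_u) = e^(-w_u)/k;
   the hypothesis on lam enters only through a Delta <= 1/4.
   By LP weak duality it suffices to find a dual solution y >= 0 of (B + A Gamma) y = 1 with
   sum y >= sum e^(-w)/k.  Take y_u = Y_u (1+w_u)/k, where Y >= 0 solves the diagonally dominant
   system e^w Y + a A Y = 1.  Since a d_u e^(-w_u) = w_u, the gap sum Y(1+w) - sum e^(-w) is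
   a times the Dirichlet form of A evaluated at Y and e^(-w).  Splitting Y = e^(-w)/(1+w) + delta,
   this form is bounded below using the energy identity of the system solved by delta and the
   mean value theorem, which pins the slope of t |-> e^(-t)/(1+t) relative to e^(-t) to [1,2]. *)

lemma lambertW:
  assumes "0 < y"
  shows "0 < lambertW y" and "lambertW y * exp (lambertW y) = y"
proof -
  have "\<exists>w\<ge>0. w \<le> y \<and> w * exp w = y"
  proof (rule IVT)
    show "0 * exp 0 \<le> y" and "y \<le> y * exp y" and "0 \<le> y"
      using assms by simp_all
    show "\<forall>w. 0 \<le> w \<and> w \<le> y \<longrightarrow> isCont (\<lambda>w. w * exp w) w"
      by (auto intro!: continuous_intros)
  qed
  then obtain w where "0 \<le> w" and w: "w * exp w = y"
    by blast
  with assms have "0 < w"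
    by (cases "w = 0") auto
  have strict_mono: "s * exp s < t * exp t" if "0 \<le> s" and "s < t" for s t :: real
    using that by (intro mult_strict_mono) auto
  have "lambertW y = w"
    unfolding lambertW_def
  proof (rule the_equality)
    show "0 < w \<and> w * exp w = y"
      using \<open>0 < w\<close> w by simp
    show "z = w" if "0 < z \<and> z * exp z = y" for z
      using strict_mono[of z w] strict_mono[of w z] that w \<open>0 < w\<close>
      by (cases z w rule: linorder_cases) auto
  qed
  with \<open>0 < w\<close> w show "0 < lambertW y" and "lambertW y * exp (lambertW y) = y"
    by simp_all
qed

lemma lambertW_eq_mult_exp_neg:
  assumes "0 < y"
  shows "lambertW y = y * exp (- lambertW y)"
  using lambertW(2)[OF assms] by (metis exp_minus_inverse mult.assoc mult.right_neutral)

lemma exp_div_one_plus_diff_of_less: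
  fixes p q :: real
  assumes "0 \<le> p" and "p < q" and "q \<le> 1/2"
  shows "\<exists>t. 1 \<le> t \<and> t \<le> 2 \<and>
           exp (-q) / (1 + q) - exp (-p) / (1 + p) = t * (exp (-q) - exp (-p))"
proof -
  \<comment> \<open>Cauchy mean value theorem; \<open>(2 + c) / (1 + c)\<^sup>2\<close> is the ratio of the derivatives
     of \<open>exp (-t) / (1 + t)\<close> and \<open>exp (-t)\<close>.\<close>
  define g' where "g' c = - (exp (-c) * ((2 + c) / (1 + c)\<^sup>2))" for c :: real
  have "\<exists>c. p < c \<and> c < q \<and>
      (exp (-q) - exp (-p)) * g' c = (exp (-q) / (1 + q) - exp (-p) / (1 + p)) * - exp (-c)"
  proof (rule GMVT')
    show "DERIV (\<lambda>t. exp (-t) / (1 + t)) c :> g' c" if "p < c" for c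
      using that \<open>0 \<le> p\<close> unfolding g'_def
      by (auto intro!: derivative_eq_intros simp: field_simps power2_eq_square minus_divide_left)
  qed (use assms in \<open>auto intro!: continuous_intros derivative_eq_intros\<close>)
  then obtain c where c: "p < c" "c < q"
    and eq: "(exp (-q) - exp (-p)) * g' c = (exp (-q) / (1 + q) - exp (-p) / (1 + p)) * - exp (-c)"
    by blast
  have "c\<^sup>2 \<le> (1/2)\<^sup>2"
    using c assms by (intro power_mono) auto
  then have "(1 + c)\<^sup>2 \<le> 2 + c" and "2 + c \<le> 2 * (1 + c)\<^sup>2"
    using c assms by (auto simp: power2_eq_square algebra_simps)
  moreover have "0 < (1 + c)\<^sup>2"
    using c assms by simp
  ultimately have "1 \<le> (2 + c) / (1 + c)\<^sup>2" and "(2 + c) / (1 + c)\<^sup>2 \<le> 2"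
    by (simp_all add: le_divide_eq divide_le_eq)
  moreover have "exp (-c) * (exp (-q) / (1 + q) - exp (-p) / (1 + p)
      - (2 + c) / (1 + c)\<^sup>2 * (exp (-q) - exp (-p))) = 0"
    using eq by (simp add: g'_def algebra_simps)
  ultimately show ?thesis
    by (intro exI[of _ "(2 + c) / (1 + c)\<^sup>2"]) simp
qed

lemma exp_div_one_plus_diff:
  fixes p q :: real
  assumes "0 \<le> p" "p \<le> 1/2" "0 \<le> q" "q \<le> 1/2"
  shows "\<exists>t. 1 \<le> t \<and> t \<le> 2 \<and>
           exp (-p) / (1 + p) - exp (-q) / (1 + q) = t * (exp (-p) - exp (-q))"
proof -
  consider "p < q" | "q < p" | "p = q"
    by linarith
  then show ?thesis
  proof cases
    case 1
    then obtain t where "1 \<le> t \<and> t \<le> 2 \<and>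
        exp (-q) / (1 + q) - exp (-p) / (1 + p) = t * (exp (-q) - exp (-p))"
      using exp_div_one_plus_diff_of_less[of p q] assms by blast
    then show ?thesis
      by (intro exI[of _ t]) (simp add: algebra_simps)
  next
    case 2
    then show ?thesis
      using exp_div_one_plus_diff_of_less[of q p] assms by blast
  qed auto
qed

lemma edge_term_lower_bound:
  fixes A B x y t :: real
  assumes "B = t * A" and "1 \<le> t" and "t \<le> 2"
  shows "A * B + (x - y) * (A - B / 2) + x * y \<ge> - (3/2) * (x\<^sup>2 + y\<^sup>2)"
proof -
  define C where "C = 2 * A - B"
  have "(2 - t)\<^sup>2 \<le> 1\<^sup>2"
    using assms by (intro power_mono) auto
  then have "(2 - t)\<^sup>2 * A\<^sup>2 \<le> 8 * t * A\<^sup>2"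
    using assms by (intro mult_right_mono) auto
  then have "C\<^sup>2 / 8 \<le> A * B"
    by (simp add: C_def assms power2_eq_square algebra_simps)
  moreover have "A * B + (x - y) * (A - B / 2) + x * y + (3/2) * (x\<^sup>2 + y\<^sup>2)
      = (A * B - C\<^sup>2 / 8) + (x - y + C / 2)\<^sup>2 / 2 + (x + y)\<^sup>2"
    by (simp add: C_def field_simps power2_eq_square)
  moreover have "0 \<le> (x - y + C / 2)\<^sup>2 / 2 + (x + y)\<^sup>2"
    by simp
  ultimately show ?thesis by linarith
qed

definition dirichlet_form :: "'a set \<Rightarrow> ('a \<Rightarrow> 'a \<Rightarrow> real) \<Rightarrow> ('a \<Rightarrow> real) \<Rightarrow> ('a \<Rightarrow> real) \<Rightarrow> real"
  where "dirichlet_form V A f g = (\<Sum>u\<in>V. \<Sum>v\<in>V. A u v * (f u - f v) * (g u - g v)) / 2"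

lemma sum_kernel_swap:
  assumes "\<And>u v. u \<in> V \<Longrightarrow> v \<in> V \<Longrightarrow> A u v = A v u"
  shows "(\<Sum>u\<in>V. \<Sum>v\<in>V. A u v * F u v) = (\<Sum>u\<in>V. \<Sum>v\<in>V. A u v * F v u)"
proof -
  have "(\<Sum>u\<in>V. \<Sum>v\<in>V. A u v * F u v) = (\<Sum>v\<in>V. \<Sum>u\<in>V. A u v * F u v)"
    by (rule sum.swap)
  also have "\<dots> = (\<Sum>u\<in>V. \<Sum>v\<in>V. A u v * F v u)"
    using assms by (intro sum.cong refl) auto
  finally show ?thesis .
qed

lemma sum_mult_kernel_commute:
  fixes A :: "'a \<Rightarrow> 'a \<Rightarrow> real"
  assumes "\<And>u v. u \<in> V \<Longrightarrow> v \<in> V \<Longrightarrow> A u v = A v u"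
  shows "(\<Sum>u\<in>V. f u * (\<Sum>v\<in>V. A u v * g v)) = (\<Sum>u\<in>V. g u * (\<Sum>v\<in>V. A u v * f v))"
proof -
  have "(\<Sum>u\<in>V. f u * (\<Sum>v\<in>V. A u v * g v)) = (\<Sum>u\<in>V. \<Sum>v\<in>V. A u v * (f u * g v))"
    by (simp add: sum_distrib_left algebra_simps)
  also have "\<dots> = (\<Sum>u\<in>V. \<Sum>v\<in>V. A u v * (f v * g u))"
    using assms by (rule sum_kernel_swap)
  also have "\<dots> = (\<Sum>u\<in>V. g u * (\<Sum>v\<in>V. A u v * f v))"
    by (simp add: sum_distrib_left algebra_simps)
  finally show ?thesis .
qed

lemma dirichlet_form_eq_sum_laplacian:
  fixes A :: "'a \<Rightarrow> 'a \<Rightarrow> real"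
  assumes "\<And>u v. u \<in> V \<Longrightarrow> v \<in> V \<Longrightarrow> A u v = A v u"
  shows "dirichlet_form V A f g = (\<Sum>u\<in>V. f u * (\<Sum>v\<in>V. A u v * (g u - g v)))"
proof -
  have "(\<Sum>u\<in>V. \<Sum>v\<in>V. A u v * (f v * (g u - g v)))
      = (\<Sum>u\<in>V. \<Sum>v\<in>V. A u v * (f u * (g v - g u)))"
    using assms by (rule sum_kernel_swap)
  then have "(\<Sum>u\<in>V. \<Sum>v\<in>V. A u v * (f u - f v) * (g u - g v))
      = 2 * (\<Sum>u\<in>V. \<Sum>v\<in>V. A u v * (f u * (g u - g v)))"
    by (simp add: sum_subtractf left_diff_distrib right_diff_distrib mult_ac)
  then show ?thesis
    by (simp add: dirichlet_form_def sum_distrib_left mult_ac)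
qed

lemma dirichlet_form_add_left:
  "dirichlet_form V A (\<lambda>u. f u + g u) h = dirichlet_form V A f h + dirichlet_form V A g h"
proof -
  have "A u v * (f u + g u - (f v + g v)) * (h u - h v)
      = A u v * (f u - f v) * (h u - h v) + A u v * (g u - g v) * (h u - h v)" for u v
    by (simp add: algebra_simps)
  then show ?thesis
    by (simp add: dirichlet_form_def sum.distrib add_divide_distrib)
qed

locale exp_weighted_system =
  fixes V :: "'a set" and A :: "'a \<Rightarrow> 'a \<Rightarrow> real" and a :: real and w Y :: "'a \<Rightarrow> real"
  assumes symmetric: "\<And>u v. u \<in> V \<Longrightarrow> v \<in> V \<Longrightarrow> A u v = A v u"
    and kernel_nonneg: "\<And>u v. u \<in> V \<Longrightarrow> v \<in> V \<Longrightarrow> 0 \<le> A u v"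
    and a_nonneg: "0 \<le> a"
    and small: "\<And>u. u \<in> V \<Longrightarrow> a * (\<Sum>v\<in>V. A u v) \<le> 1/4"
    and w_eq: "\<And>u. u \<in> V \<Longrightarrow> w u = a * (\<Sum>v\<in>V. A u v) * exp (- w u)"
    and Y_eq: "\<And>u. u \<in> V \<Longrightarrow> exp (w u) * Y u + a * (\<Sum>v\<in>V. A u v * Y v) = 1"
begin

definition \<rho> :: "'a \<Rightarrow> real" where "\<rho> u = exp (- w u)"

text \<open>Because of \<open>w_eq\<close>, \<open>\<eta>\<close> solves the system \<open>Y_eq\<close> with \<open>A\<close> replaced by the diagonal
  matrix of its row sums; the error \<open>\<delta>\<close> is controlled through the energy identity \<open>\<delta>_energy\<close>.\<close>

definition \<eta> :: "'a \<Rightarrow> real" where "\<eta> u = \<rho> u / (1 + w u)"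

definition \<delta> :: "'a \<Rightarrow> real" where "\<delta> u = Y u - \<eta> u"

lemma w_bounds:
  assumes "u \<in> V"
  shows "0 \<le> w u \<and> w u \<le> 1/4"
proof -
  have "0 \<le> a * (\<Sum>v\<in>V. A u v)"
    using a_nonneg kernel_nonneg assms by (simp add: sum_nonneg)
  then have "0 \<le> w u"
    using w_eq[OF assms] by (metis exp_ge_zero mult_nonneg_nonneg)
  then have "w u \<le> a * (\<Sum>v\<in>V. A u v)"
    using w_eq[OF assms] \<open>0 \<le> a * (\<Sum>v\<in>V. A u v)\<close> by (metis exp_le_one_iff mult_left_le neg_le_0_iff_le)
  then show ?thesis
    using \<open>0 \<le> w u\<close> small[OF assms] by simp
qed

lemma exp_w_mult_\<rho>: "exp (w u) * \<rho> u = 1"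
  by (simp add: \<rho>_def flip: exp_add)

lemma w_eq_\<rho>: "u \<in> V \<Longrightarrow> w u = a * (\<Sum>v\<in>V. A u v) * \<rho> u"
  using w_eq by (simp add: \<rho>_def)

lemma sum_Y_one_plus_w_minus_sum_\<rho>:
  "(\<Sum>u\<in>V. Y u * (1 + w u)) - (\<Sum>u\<in>V. \<rho> u) = a * dirichlet_form V A Y \<rho>"
proof -
  have "(\<Sum>u\<in>V. \<rho> u) = (\<Sum>u\<in>V. \<rho> u * (exp (w u) * Y u + a * (\<Sum>v\<in>V. A u v * Y v)))"
    using Y_eq by simp
  also have "\<dots> = (\<Sum>u\<in>V. Y u) + a * (\<Sum>u\<in>V. \<rho> u * (\<Sum>v\<in>V. A u v * Y v))"
    using exp_w_mult_\<rho> by (simp add: sum.distrib sum_distrib_left algebra_simps)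
  also have "\<dots> = (\<Sum>u\<in>V. Y u) + a * (\<Sum>u\<in>V. Y u * (\<Sum>v\<in>V. A u v * \<rho> v))"
    using symmetric by (subst sum_mult_kernel_commute) auto
  finally have sum_\<rho>: "(\<Sum>u\<in>V. \<rho> u)
      = (\<Sum>u\<in>V. Y u) + a * (\<Sum>u\<in>V. Y u * (\<Sum>v\<in>V. A u v * \<rho> v))" .
  have "(\<Sum>u\<in>V. Y u * (1 + w u)) = (\<Sum>u\<in>V. Y u) + a * (\<Sum>u\<in>V. Y u * ((\<Sum>v\<in>V. A u v) * \<rho> u))"
    using w_eq_\<rho> by (simp add: distrib_left sum.distrib sum_distrib_left mult_ac)
  moreover have "a * dirichlet_form V A Y \<rho>
      = a * (\<Sum>u\<in>V. Y u * ((\<Sum>v\<in>V. A u v) * \<rho> u)) - a * (\<Sum>u\<in>V. Y u * (\<Sum>v\<in>V. A u v * \<rho> v))"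
    using symmetric
    by (simp add: dirichlet_form_eq_sum_laplacian right_diff_distrib sum_subtractf sum_distrib_right)
  ultimately show ?thesis
    using sum_\<rho> by linarith
qed

lemma \<delta>_eq:
  assumes "u \<in> V"
  shows "exp (w u) * \<delta> u + a * (\<Sum>v\<in>V. A u v * \<delta> v) = a * (\<Sum>v\<in>V. A u v * (\<eta> u - \<eta> v))"
proof -
  have "exp (w u) * \<eta> u = 1 / (1 + w u)"
    using exp_w_mult_\<rho> by (simp add: \<eta>_def)
  moreover have "a * (\<Sum>v\<in>V. A u v) * \<eta> u = w u / (1 + w u)"
    using w_eq_\<rho>[OF assms] by (simp add: \<eta>_def)
  moreover have "1 / (1 + w u) + w u / (1 + w u) = 1"
    using w_bounds[OF assms] by (simp add: add_divide_distrib[symmetric])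
  ultimately have "exp (w u) * \<eta> u + a * (\<Sum>v\<in>V. A u v) * \<eta> u = 1"
    by simp
  moreover have "(\<Sum>v\<in>V. A u v * (\<eta> u - \<eta> v)) = (\<Sum>v\<in>V. A u v) * \<eta> u - (\<Sum>v\<in>V. A u v * \<eta> v)"
    by (simp add: right_diff_distrib sum_subtractf sum_distrib_right)
  ultimately show ?thesis
    using Y_eq[OF assms] by (simp add: \<delta>_def right_diff_distrib sum_subtractf algebra_simps)
qed

lemma \<delta>_energy:
  "(\<Sum>u\<in>V. exp (w u) * (\<delta> u)\<^sup>2) + a * (\<Sum>u\<in>V. \<delta> u * (\<Sum>v\<in>V. A u v * \<delta> v))
     = a * dirichlet_form V A \<delta> \<eta>"
proof -
  have "(\<Sum>u\<in>V. exp (w u) * (\<delta> u)\<^sup>2) + a * (\<Sum>u\<in>V. \<delta> u * (\<Sum>v\<in>V. A u v * \<delta> v))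
      = (\<Sum>u\<in>V. \<delta> u * (exp (w u) * \<delta> u + a * (\<Sum>v\<in>V. A u v * \<delta> v)))"
    by (simp add: sum.distrib sum_distrib_left power2_eq_square algebra_simps)
  also have "\<dots> = (\<Sum>u\<in>V. \<delta> u * (a * (\<Sum>v\<in>V. A u v * (\<eta> u - \<eta> v))))"
    using \<delta>_eq by simp
  also have "\<dots> = a * dirichlet_form V A \<delta> \<eta>"
    using symmetric by (simp add: dirichlet_form_eq_sum_laplacian sum_distrib_left mult_ac)
  finally show ?thesis .
qed

definition edge_term :: "'a \<Rightarrow> 'a \<Rightarrow> real" where
  "edge_term u v = (\<rho> u - \<rho> v) * (\<eta> u - \<eta> v)
     + (\<delta> u - \<delta> v) * ((\<rho> u - \<rho> v) - (\<eta> u - \<eta> v) / 2) + \<delta> u * \<delta> v"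

lemma twice_dirichlet_form_Y_\<rho>:
  "2 * (a * dirichlet_form V A Y \<rho>)
     = (\<Sum>u\<in>V. exp (w u) * (\<delta> u)\<^sup>2) + a * (\<Sum>u\<in>V. \<Sum>v\<in>V. A u v * edge_term u v)"
proof -
  have "A u v * edge_term u v = A u v * (\<eta> u - \<eta> v) * (\<rho> u - \<rho> v)
      + A u v * (\<delta> u - \<delta> v) * (\<rho> u - \<rho> v)
      - A u v * (\<delta> u - \<delta> v) * (\<eta> u - \<eta> v) / 2 + A u v * (\<delta> u * \<delta> v)" for u v
    by (simp add: edge_term_def algebra_simps)
  then have "(\<Sum>u\<in>V. \<Sum>v\<in>V. A u v * edge_term u v)
      = 2 * dirichlet_form V A \<eta> \<rho> + 2 * dirichlet_form V A \<delta> \<rho> - dirichlet_form V A \<delta> \<eta>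
        + (\<Sum>u\<in>V. \<delta> u * (\<Sum>v\<in>V. A u v * \<delta> v))"
    by (simp add: dirichlet_form_def sum.distrib sum_subtractf sum_divide_distrib
        sum_distrib_left mult_ac)
  then have "a * (\<Sum>u\<in>V. \<Sum>v\<in>V. A u v * edge_term u v)
      = 2 * (a * dirichlet_form V A \<eta> \<rho>) + 2 * (a * dirichlet_form V A \<delta> \<rho>)
        - a * dirichlet_form V A \<delta> \<eta> + a * (\<Sum>u\<in>V. \<delta> u * (\<Sum>v\<in>V. A u v * \<delta> v))"
    by (simp only:) (simp add: algebra_simps)
  moreover have "dirichlet_form V A Y \<rho> = dirichlet_form V A \<eta> \<rho> + dirichlet_form V A \<delta> \<rho>"
    using dirichlet_form_add_left[of V A \<eta> \<delta> \<rho>] by (simp add: \<delta>_def)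
  ultimately show ?thesis
    using \<delta>_energy by (simp add: distrib_left)
qed

lemma edge_term_ge:
  assumes "u \<in> V" and "v \<in> V"
  shows "- (3/2) * ((\<delta> u)\<^sup>2 + (\<delta> v)\<^sup>2) \<le> edge_term u v"
proof -
  obtain t where "\<eta> u - \<eta> v = t * (\<rho> u - \<rho> v)" and "1 \<le> t" and "t \<le> 2"
    using exp_div_one_plus_diff[of "w u" "w v"] w_bounds[OF assms(1)] w_bounds[OF assms(2)]
    by (auto simp: \<eta>_def \<rho>_def)
  then show ?thesis
    unfolding edge_term_def by (rule edge_term_lower_bound)
qed

lemma sum_edge_term_ge:
  "- 3 * (\<Sum>u\<in>V. (\<Sum>v\<in>V. A u v) * (\<delta> u)\<^sup>2) \<le> (\<Sum>u\<in>V. \<Sum>v\<in>V. A u v * edge_term u v)"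
proof -
  have "A u v * (- (3/2) * ((\<delta> u)\<^sup>2 + (\<delta> v)\<^sup>2))
      = - (3/2) * (A u v * (\<delta> u)\<^sup>2) + - (3/2) * (A u v * (\<delta> v)\<^sup>2)" for u v
    by (simp add: algebra_simps)
  then have "(\<Sum>u\<in>V. \<Sum>v\<in>V. A u v * (- (3/2) * ((\<delta> u)\<^sup>2 + (\<delta> v)\<^sup>2)))
      = - (3/2) * (\<Sum>u\<in>V. \<Sum>v\<in>V. A u v * (\<delta> u)\<^sup>2)
        + - (3/2) * (\<Sum>u\<in>V. \<Sum>v\<in>V. A u v * (\<delta> v)\<^sup>2)"
    by (simp only: sum.distrib sum_distrib_left)
  also have "(\<Sum>u\<in>V. \<Sum>v\<in>V. A u v * (\<delta> v)\<^sup>2) = (\<Sum>u\<in>V. \<Sum>v\<in>V. A u v * (\<delta> u)\<^sup>2)"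
    using symmetric by (rule sum_kernel_swap)
  also have "(\<Sum>u\<in>V. \<Sum>v\<in>V. A u v * (\<delta> u)\<^sup>2) = (\<Sum>u\<in>V. (\<Sum>v\<in>V. A u v) * (\<delta> u)\<^sup>2)"
    by (simp add: sum_distrib_right)
  finally have "(\<Sum>u\<in>V. \<Sum>v\<in>V. A u v * (- (3/2) * ((\<delta> u)\<^sup>2 + (\<delta> v)\<^sup>2)))
      = - 3 * (\<Sum>u\<in>V. (\<Sum>v\<in>V. A u v) * (\<delta> u)\<^sup>2)"
    by simp
  moreover have "(\<Sum>u\<in>V. \<Sum>v\<in>V. A u v * (- (3/2) * ((\<delta> u)\<^sup>2 + (\<delta> v)\<^sup>2)))
      \<le> (\<Sum>u\<in>V. \<Sum>v\<in>V. A u v * edge_term u v)"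
    using kernel_nonneg edge_term_ge by (intro sum_mono mult_left_mono) auto
  ultimately show ?thesis
    by simp
qed

lemma dirichlet_form_Y_\<rho>_nonneg: "0 \<le> a * dirichlet_form V A Y \<rho>"
proof -
  have "0 \<le> exp (w u) * (\<delta> u)\<^sup>2 - 3 * (a * ((\<Sum>v\<in>V. A u v) * (\<delta> u)\<^sup>2))" if "u \<in> V" for u
  proof -
    have "1 \<le> exp (w u)"
      using w_bounds[OF that] by simp
    then have "3 * (a * (\<Sum>v\<in>V. A u v)) \<le> exp (w u)"
      using small[OF that] by linarith
    then have "0 \<le> (exp (w u) - 3 * (a * (\<Sum>v\<in>V. A u v))) * (\<delta> u)\<^sup>2"
      by simp
    then show ?thesis
      by (simp add: algebra_simps)
  qed
  then have "0 \<le> (\<Sum>u\<in>V. exp (w u) * (\<delta> u)\<^sup>2 - 3 * (a * ((\<Sum>v\<in>V. A u v) * (\<delta> u)\<^sup>2)))"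
    by (rule sum_nonneg)
  also have "\<dots> = (\<Sum>u\<in>V. exp (w u) * (\<delta> u)\<^sup>2) - 3 * (a * (\<Sum>u\<in>V. (\<Sum>v\<in>V. A u v) * (\<delta> u)\<^sup>2))"
    by (simp add: sum_subtractf sum_distrib_left)
  finally have "0 \<le> (\<Sum>u\<in>V. exp (w u) * (\<delta> u)\<^sup>2) - 3 * (a * (\<Sum>u\<in>V. (\<Sum>v\<in>V. A u v) * (\<delta> u)\<^sup>2))" .
  moreover have "a * (- 3 * (\<Sum>u\<in>V. (\<Sum>v\<in>V. A u v) * (\<delta> u)\<^sup>2))
      \<le> a * (\<Sum>u\<in>V. \<Sum>v\<in>V. A u v * edge_term u v)"
    by (rule mult_left_mono[OF sum_edge_term_ge a_nonneg])
  ultimately show ?thesis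
    using twice_dirichlet_form_Y_\<rho> by simp
qed

lemma sum_exp_le_sum_Y: "(\<Sum>u\<in>V. exp (- w u)) \<le> (\<Sum>u\<in>V. Y u * (1 + w u))"
  using sum_Y_one_plus_w_minus_sum_\<rho> dirichlet_form_Y_\<rho>_nonneg by (simp add: \<rho>_def)

end

lemma convergent_of_geometric_increments:
  fixes y :: "nat \<Rightarrow> real"
  assumes steps: "\<And>n. \<bar>y (Suc n) - y n\<bar> \<le> q ^ n" and "q < 1"
  shows "convergent y"
proof -
  have "0 \<le> q"
    using steps[of 1] by (metis abs_ge_zero order_trans power_one_right)
  have "summable (\<lambda>n. y (Suc n) - y n)"
  proof (rule summable_comparison_test)
    show "\<exists>N. \<forall>n\<ge>N. norm (y (Suc n) - y n) \<le> q ^ n"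
      using steps by auto
    show "summable (\<lambda>n. q ^ n)"
      using \<open>0 \<le> q\<close> \<open>q < 1\<close> by (simp add: summable_geometric)
  qed
  then have "(\<lambda>n. \<Sum>i<n. y (Suc i) - y i) \<longlonglongrightarrow> (\<Sum>i. y (Suc i) - y i)"
    by (rule summable_LIMSEQ)
  then have "(\<lambda>n. y n - y 0 + y 0) \<longlonglongrightarrow> (\<Sum>i. y (Suc i) - y i) + y 0"
    by (intro tendsto_add) (simp_all add: sum_lessThan_telescope)
  then show ?thesis
    by (auto simp: convergent_def)
qed

definition jacobi_step :: "'a set \<Rightarrow> ('a \<Rightarrow> 'a \<Rightarrow> real) \<Rightarrow> real \<Rightarrow> ('a \<Rightarrow> real) \<Rightarrow> ('a \<Rightarrow> real) \<Rightarrow> 'a \<Rightarrow> real"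
  where "jacobi_step V A a m f u = (1 - a * (\<Sum>v\<in>V. A u v * f v)) / m u"

lemma jacobi_step_bounds:
  fixes A :: "'a \<Rightarrow> 'a \<Rightarrow> real"
  assumes "1 \<le> m u" and A: "\<And>v. v \<in> V \<Longrightarrow> 0 \<le> A u v" and "0 \<le> a"
    and "a * (\<Sum>v\<in>V. A u v) \<le> 1" and f: "\<And>v. v \<in> V \<Longrightarrow> 0 \<le> f v \<and> f v \<le> 1"
  shows "0 \<le> jacobi_step V A a m f u \<and> jacobi_step V A a m f u \<le> 1"
proof -
  have "0 \<le> a * (\<Sum>v\<in>V. A u v * f v)"
    using f A \<open>0 \<le> a\<close> by (simp add: sum_nonneg)
  moreover have "a * (\<Sum>v\<in>V. A u v * f v) \<le> a * (\<Sum>v\<in>V. A u v)"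
    using f A \<open>0 \<le> a\<close> by (intro mult_left_mono sum_mono) (simp_all add: mult_left_le)
  ultimately show ?thesis
    using assms(1,4) by (simp add: jacobi_step_def pos_divide_le_eq)
qed

lemma jacobi_step_contraction:
  fixes A :: "'a \<Rightarrow> 'a \<Rightarrow> real"
  assumes "1 \<le> m u" and A: "\<And>v. v \<in> V \<Longrightarrow> 0 \<le> A u v" and "0 \<le> a"
    and q: "a * (\<Sum>v\<in>V. A u v) \<le> q" and "0 \<le> B" and fg: "\<And>v. v \<in> V \<Longrightarrow> \<bar>f v - g v\<bar> \<le> B"
  shows "\<bar>jacobi_step V A a m f u - jacobi_step V A a m g u\<bar> \<le> q * B"
proof -
  have "jacobi_step V A a m f u - jacobi_step V A a m g u = a * (\<Sum>v\<in>V. A u v * (g v - f v)) / m u"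
    by (simp add: jacobi_step_def diff_divide_distrib[symmetric] right_diff_distrib sum_subtractf)
  then have "\<bar>jacobi_step V A a m f u - jacobi_step V A a m g u\<bar>
      = a * \<bar>\<Sum>v\<in>V. A u v * (g v - f v)\<bar> / m u"
    using \<open>1 \<le> m u\<close> \<open>0 \<le> a\<close> by (simp add: abs_mult)
  also have "\<dots> \<le> a * \<bar>\<Sum>v\<in>V. A u v * (g v - f v)\<bar>"
    using \<open>1 \<le> m u\<close> \<open>0 \<le> a\<close>
    by (intro mult_imp_div_pos_le) (auto simp: mult_le_cancel_left1 mult_less_0_iff)
  also have "\<dots> \<le> a * (\<Sum>v\<in>V. A u v * B)"
    using fg A \<open>0 \<le> a\<close>
    by (intro mult_left_mono order_trans[OF sum_abs] sum_mono)
      (auto simp: abs_mult abs_minus_commute mult_left_mono)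
  also have "\<dots> \<le> q * B"
    using q \<open>0 \<le> B\<close> by (simp add: sum_distrib_right[symmetric] mult.assoc[symmetric] mult_right_mono)
  finally show ?thesis .
qed

lemma exists_nonneg_solution:
  fixes A :: "'a \<Rightarrow> 'a \<Rightarrow> real"
  assumes "finite V"
    and m: "\<And>u. u \<in> V \<Longrightarrow> 1 \<le> m u"
    and A: "\<And>u v. u \<in> V \<Longrightarrow> v \<in> V \<Longrightarrow> 0 \<le> A u v"
    and "0 \<le> a"
    and q: "\<And>u. u \<in> V \<Longrightarrow> a * (\<Sum>v\<in>V. A u v) \<le> q" and "q < 1"
  shows "\<exists>Y. \<forall>u\<in>V. 0 \<le> Y u \<and> m u * Y u + a * (\<Sum>v\<in>V. A u v * Y v) = 1"
proof -
  define T where "T = jacobi_step V A a m"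
  define y where "y n = (T ^^ n) (\<lambda>_. 0)" for n
  have y_Suc: "y (Suc n) = T (y n)" for n
    by (simp add: y_def)
  have y_bounds: "\<forall>u\<in>V. 0 \<le> y n u \<and> y n u \<le> 1" for n
  proof (induction n)
    case (Suc n)
    show ?case
    proof
      fix u assume "u \<in> V"
      have "a * (\<Sum>v\<in>V. A u v) \<le> 1"
        using q[OF \<open>u \<in> V\<close>] \<open>q < 1\<close> by simp
      then have "0 \<le> jacobi_step V A a m (y n) u \<and> jacobi_step V A a m (y n) u \<le> 1"
        by (intro jacobi_step_bounds) (use m A \<open>0 \<le> a\<close> \<open>u \<in> V\<close> Suc.IH in auto)
      then show "0 \<le> y (Suc n) u \<and> y (Suc n) u \<le> 1"
        by (simp add: y_Suc T_def)
    qed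
  qed (simp add: y_def)
  have y_steps: "\<forall>u\<in>V. \<bar>y (Suc n) u - y n u\<bar> \<le> q ^ n" for n
  proof (induction n)
    case 0
    then show ?case using y_bounds[of 1] by (simp add: y_Suc) (simp add: y_def)
  next
    case (Suc n)
    show ?case
    proof
      fix u assume "u \<in> V"
      have "0 \<le> a * (\<Sum>v\<in>V. A u v)"
        using A \<open>u \<in> V\<close> \<open>0 \<le> a\<close> by (simp add: sum_nonneg)
      with q[OF \<open>u \<in> V\<close>] have "0 \<le> q ^ n"
        by simp
      have "\<bar>jacobi_step V A a m (y (Suc n)) u - jacobi_step V A a m (y n) u\<bar> \<le> q * q ^ n"
        by (rule jacobi_step_contraction) (use m A q \<open>0 \<le> a\<close> \<open>0 \<le> q ^ n\<close> \<open>u \<in> V\<close> Suc.IH in auto)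
      then show "\<bar>y (Suc (Suc n)) u - y (Suc n) u\<bar> \<le> q ^ Suc n"
        by (simp only: y_Suc T_def power_Suc)
    qed
  qed
  define Y where "Y u = lim (\<lambda>n. y n u)" for u
  have y_lim: "(\<lambda>n. y n u) \<longlonglongrightarrow> Y u" if "u \<in> V" for u
    using convergent_of_geometric_increments[of "\<lambda>n. y n u" q] y_steps \<open>q < 1\<close> that
    by (simp add: Y_def convergent_LIMSEQ_iff)
  have Y_fixed: "Y u = T Y u" if "u \<in> V" for u
  proof (rule LIMSEQ_unique)
    show "(\<lambda>n. y (Suc n) u) \<longlonglongrightarrow> Y u"
      using y_lim[OF that] by (rule LIMSEQ_Suc)
    have "(\<lambda>n. \<Sum>v\<in>V. A u v * y n v) \<longlonglongrightarrow> (\<Sum>v\<in>V. A u v * Y v)"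
      using y_lim by (intro tendsto_sum tendsto_mult_left) auto
    then show "(\<lambda>n. y (Suc n) u) \<longlonglongrightarrow> T Y u"
      unfolding y_Suc T_def jacobi_step_def
      by (intro tendsto_divide tendsto_diff tendsto_mult_left) (use m[OF that] in auto)
  qed
  show ?thesis
  proof (intro exI[of _ Y] ballI conjI)
    fix u assume "u \<in> V"
    show "0 \<le> Y u"
      using y_lim[OF \<open>u \<in> V\<close>] by (rule LIMSEQ_le_const) (use y_bounds \<open>u \<in> V\<close> in auto)
    show "m u * Y u + a * (\<Sum>v\<in>V. A u v * Y v) = 1"
      using Y_fixed[OF \<open>u \<in> V\<close>] m[OF \<open>u \<in> V\<close>] by (simp add: T_def jacobi_step_def)
  qed
qed

lemma sum_le_of_dual_feasible:
  fixes A :: "'a \<Rightarrow> 'a \<Rightarrow> real" and x z \<beta> \<gamma> :: "'a \<Rightarrow> real"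
  assumes symmetric: "\<And>u v. u \<in> V \<Longrightarrow> v \<in> V \<Longrightarrow> A u v = A v u"
    and primal: "\<And>u. u \<in> V \<Longrightarrow> 1 \<le> \<beta> u * x u + \<gamma> u * (\<Sum>v\<in>V. A u v * x v)"
    and dual_nonneg: "\<And>u. u \<in> V \<Longrightarrow> 0 \<le> z u"
    and dual: "\<And>u. u \<in> V \<Longrightarrow> \<beta> u * z u + (\<Sum>v\<in>V. A u v * (\<gamma> v * z v)) = 1"
  shows "(\<Sum>u\<in>V. z u) \<le> (\<Sum>u\<in>V. x u)"
proof -
  have "(\<Sum>u\<in>V. z u) \<le> (\<Sum>u\<in>V. z u * (\<beta> u * x u + \<gamma> u * (\<Sum>v\<in>V. A u v * x v)))"
  proof (rule sum_mono)
    fix u assume "u \<in> V"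
    show "z u \<le> z u * (\<beta> u * x u + \<gamma> u * (\<Sum>v\<in>V. A u v * x v))"
      using mult_left_mono[OF primal dual_nonneg, OF \<open>u \<in> V\<close> \<open>u \<in> V\<close>] by simp
  qed
  also have "\<dots> = (\<Sum>u\<in>V. x u * (\<beta> u * z u)) + (\<Sum>u\<in>V. (\<gamma> u * z u) * (\<Sum>v\<in>V. A u v * x v))"
    by (simp add: sum.distrib distrib_left mult_ac)
  also have "(\<Sum>u\<in>V. (\<gamma> u * z u) * (\<Sum>v\<in>V. A u v * x v))
      = (\<Sum>u\<in>V. x u * (\<Sum>v\<in>V. A u v * (\<gamma> v * z v)))"
    using symmetric by (rule sum_mult_kernel_commute)
  also have "(\<Sum>u\<in>V. x u * (\<beta> u * z u)) + \<dots>
      = (\<Sum>u\<in>V. x u * (\<beta> u * z u + (\<Sum>v\<in>V. A u v * (\<gamma> v * z v))))"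
    by (simp add: sum.distrib distrib_left)
  also have "\<dots> = (\<Sum>u\<in>V. x u)"
    using dual by simp
  finally show ?thesis .
qed

lemma sum_dual_solution_le:
  fixes A :: "'a \<Rightarrow> 'a \<Rightarrow> real" and w x Y :: "'a \<Rightarrow> real"
  assumes symmetric: "\<And>u v. u \<in> V \<Longrightarrow> v \<in> V \<Longrightarrow> A u v = A v u"
    and "0 < k" and w_nonneg: "\<And>u. u \<in> V \<Longrightarrow> 0 \<le> w u"
    and Y: "\<And>u. u \<in> V \<Longrightarrow> 0 \<le> Y u \<and> exp (w u) * Y u + a * (\<Sum>v\<in>V. A u v * Y v) = 1"
    and feasible: "\<And>u. u \<in> V \<Longrightarrow>
      1 \<le> k * exp (w u) / (1 + w u) * x u + k * a / (1 + w u) * (\<Sum>v\<in>V. A u v * x v)"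
  shows "(\<Sum>u\<in>V. Y u * (1 + w u) / k) \<le> (\<Sum>u\<in>V. x u)"
proof (rule sum_le_of_dual_feasible[where \<beta> = "\<lambda>u. k * exp (w u) / (1 + w u)"
      and \<gamma> = "\<lambda>u. k * a / (1 + w u)", OF symmetric feasible])
  fix u assume "u \<in> V"
  show "0 \<le> Y u * (1 + w u) / k"
    using Y w_nonneg \<open>u \<in> V\<close> \<open>0 < k\<close> by simp
  have "k * a / (1 + w v) * (Y v * (1 + w v) / k) = a * Y v" if "v \<in> V" for v
    using w_nonneg[OF that] \<open>0 < k\<close> by (simp add: field_simps add_nonneg_eq_0_iff)
  then have "(\<Sum>v\<in>V. A u v * (k * a / (1 + w v) * (Y v * (1 + w v) / k)))
      = a * (\<Sum>v\<in>V. A u v * Y v)"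
    unfolding sum_distrib_left by (intro sum.cong) (simp_all add: mult.left_commute)
  moreover have "k * exp (w u) / (1 + w u) * (Y u * (1 + w u) / k) = exp (w u) * Y u"
    using w_nonneg[OF \<open>u \<in> V\<close>] \<open>0 < k\<close> by (simp add: field_simps add_nonneg_eq_0_iff)
  ultimately show "k * exp (w u) / (1 + w u) * (Y u * (1 + w u) / k)
      + (\<Sum>v\<in>V. A u v * (k * a / (1 + w v) * (Y v * (1 + w v) / k))) = 1"
    using Y[OF \<open>u \<in> V\<close>] by simp
qed

theorem sum_exp_neg_div_le_of_feasible:
  fixes A :: "'a \<Rightarrow> 'a \<Rightarrow> real" and w x :: "'a \<Rightarrow> real"
  assumes "finite V"
    and symmetric: "\<And>u v. u \<in> V \<Longrightarrow> v \<in> V \<Longrightarrow> A u v = A v u"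
    and kernel_nonneg: "\<And>u v. u \<in> V \<Longrightarrow> v \<in> V \<Longrightarrow> 0 \<le> A u v"
    and "0 \<le> a" and "0 < k"
    and small: "\<And>u. u \<in> V \<Longrightarrow> a * (\<Sum>v\<in>V. A u v) \<le> 1/4"
    and w_eq: "\<And>u. u \<in> V \<Longrightarrow> w u = a * (\<Sum>v\<in>V. A u v) * exp (- w u)"
    and feasible: "\<And>u. u \<in> V \<Longrightarrow>
      1 \<le> k * exp (w u) / (1 + w u) * x u + k * a / (1 + w u) * (\<Sum>v\<in>V. A u v * x v)"
  shows "(\<Sum>u\<in>V. exp (- w u)) / k \<le> (\<Sum>u\<in>V. x u)"
proof -
  have w_nonneg: "0 \<le> w u" if "u \<in> V" for u
  proof -
    have "0 \<le> a * (\<Sum>v\<in>V. A u v)"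
      using \<open>0 \<le> a\<close> kernel_nonneg that by (simp add: sum_nonneg)
    then show ?thesis
      using w_eq[OF that] by (metis exp_ge_zero mult_nonneg_nonneg)
  qed
  have "\<exists>Y. \<forall>u\<in>V. 0 \<le> Y u \<and> exp (w u) * Y u + a * (\<Sum>v\<in>V. A u v * Y v) = 1"
    by (rule exists_nonneg_solution[OF \<open>finite V\<close> _ kernel_nonneg \<open>0 \<le> a\<close> small])
      (use w_nonneg in auto)
  then obtain Y where Y: "\<forall>u\<in>V. 0 \<le> Y u \<and> exp (w u) * Y u + a * (\<Sum>v\<in>V. A u v * Y v) = 1"
    by blast
  interpret exp_weighted_system V A a w Y
  proof
    show "exp (w u) * Y u + a * (\<Sum>v\<in>V. A u v * Y v) = 1" if "u \<in> V" for u
      using Y that by simp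
  qed (fact symmetric kernel_nonneg \<open>0 \<le> a\<close> small w_eq)+
  have "(\<Sum>u\<in>V. exp (- w u)) / k \<le> (\<Sum>u\<in>V. Y u * (1 + w u)) / k"
    using sum_exp_le_sum_Y \<open>0 < k\<close> by (simp add: divide_right_mono)
  also have "\<dots> = (\<Sum>u\<in>V. Y u * (1 + w u) / k)"
    by (rule sum_divide_distrib)
  also have "\<dots> \<le> (\<Sum>u\<in>V. x u)"
    using sum_dual_solution_le[OF symmetric \<open>0 < k\<close> w_nonneg _ feasible] Y by blast
  finally show ?thesis .
qed

lemma cconst_bound:
  fixes b lam D :: real
  assumes b: "b = 0 \<or> 1 \<le> b" and "0 < lam" and "1 \<le> D" and lam_D: "lam * D < cconst b"
  shows "(1 + lam) powr b * ln (1 + lam) * D \<le> 1/4"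
proof -
  have ln_le: "ln (1 + lam) * D \<le> lam * D"
    using \<open>0 < lam\<close> \<open>1 \<le> D\<close> by (intro mult_right_mono ln_add_one_self_le_self) auto
  from b show ?thesis
  proof
    assume "b = 0"
    then show ?thesis
      using ln_le lam_D \<open>0 < lam\<close> by (simp add: cconst_def)
  next
    assume "1 \<le> b"
    then have b_lam_D: "b * (lam * D) < 0.0896883"
      using lam_D by (simp add: cconst_def pos_less_divide_eq mult_ac)
    have "lam * D \<le> b * (lam * D)" and "b * lam \<le> b * (lam * D)"
      using \<open>1 \<le> b\<close> \<open>0 < lam\<close> \<open>1 \<le> D\<close> by (simp_all add: mult_right_mono mult_left_mono)
    then have "b * lam \<le> 1/2"
      using b_lam_D by simp
    have "(1 + lam) powr b = exp (b * ln (1 + lam))"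
      using \<open>0 < lam\<close> by (simp add: powr_def)
    also have "\<dots> \<le> exp (b * lam)"
      using \<open>1 \<le> b\<close> \<open>0 < lam\<close> by (simp add: ln_add_one_self_le_self)
    also have "\<dots> \<le> 1 + 2 * (b * lam)"
      using \<open>1 \<le> b\<close> \<open>0 < lam\<close> \<open>b * lam \<le> 1/2\<close> by (intro real_exp_bound_lemma) auto
    also have "\<dots> \<le> 2"
      using \<open>b * lam \<le> 1/2\<close> by simp
    finally have "(1 + lam) powr b * (ln (1 + lam) * D) \<le> 2 * (lam * D)"
      using ln_le \<open>0 < lam\<close> \<open>1 \<le> D\<close> by (intro mult_mono) auto
    then show ?thesis
      using \<open>lam * D \<le> b * (lam * D)\<close> b_lam_D by (simp add: mult.assoc)
  qed
qed

lemma Dval_pos: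
  assumes "0 < lam" and "d \<noteq> 0"
  shows "0 < Dval b lam d"
  using assms by (simp add: Dval_def)

lemma betaval_eq:
  assumes "0 < Dval b lam d"
  shows "betaval b lam d
    = (1 + lam) / lam * exp (lambertW (Dval b lam d)) / (1 + lambertW (Dval b lam d))"
proof -
  define W where "W = lambertW (Dval b lam d)"
  have "0 < W" and W: "W * exp W = Dval b lam d"
    using lambertW[OF assms] by (simp_all add: W_def)
  then have "Dval b lam d / (W * (1 + W)) = exp W / (1 + W)"
    by (simp flip: W)
  then show ?thesis
    unfolding betaval_def W_def[symmetric] by simp
qed

lemma gammaval_eq:
  assumes "d \<noteq> 0"
  shows "gammaval b lam d
    = (1 + lam) / lam * ((1 + lam) powr b * ln (1 + lam)) / (1 + lambertW (Dval b lam d))"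
  using assms by (simp add: gammaval_def Dval_def mult.assoc)

lemma one_div_betaval_add_gammaval:
  assumes "0 < Dval b lam d" and "0 < lam"
  shows "1 / (betaval b lam d + real d * gammaval b lam d)
    = exp (- lambertW (Dval b lam d)) / ((1 + lam) / lam)"
proof -
  define W where "W = lambertW (Dval b lam d)"
  have "0 < W" and W: "W * exp W = real d * ((1 + lam) powr b * ln (1 + lam))"
    using lambertW[OF assms(1)] by (simp_all add: W_def Dval_def mult.assoc)
  have "d \<noteq> 0"
    using assms(1) by (rule_tac ccontr) (simp add: Dval_def)
  have "betaval b lam d + real d * gammaval b lam d
      = (1 + lam) / lam * (exp W / (1 + W) + real d * ((1 + lam) powr b * ln (1 + lam)) / (1 + W))"
    using betaval_eq[OF assms(1)] gammaval_eq[OF \<open>d \<noteq> 0\<close>]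
    by (simp add: W_def distrib_left mult.left_commute)
  also have "\<dots> = (1 + lam) / lam * (exp W / (1 + W) + W * exp W / (1 + W))"
    by (simp only: W)
  also have "\<dots> = (1 + lam) / lam * ((1 + W) * exp W / (1 + W))"
    by (simp add: add_divide_distrib[symmetric] algebra_simps)
  also have "\<dots> = (1 + lam) / lam * exp W"
    using \<open>0 < W\<close> by simp
  finally show ?thesis
    by (simp add: W_def exp_minus divide_inverse)
qed

lemma adj_nonneg: "0 \<le> adj E u v"
  by (simp add: adj_def)

lemma adj_symmetric: "simple_graph V E \<Longrightarrow> adj E u v = adj E v u"
  by (auto simp: simple_graph_def adj_def)

lemma sum_adj_eq_degree: "finite V \<Longrightarrow> (\<Sum>v\<in>V. adj E u v) = real (degree V E u)"
  by (simp add: adj_def degree_def sum.If_cases Int_def conj_commute)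

lemma degree_le_max_degree: "finite V \<Longrightarrow> u \<in> V \<Longrightarrow> degree V E u \<le> max_degree V E"
  by (simp add: max_degree_def)

lemma degree_cconst_bound:
  assumes "finite V" and "u \<in> V" and "1 \<le> degree V E u"
    and "b = 0 \<or> 1 \<le> b" and "0 < lam" and "lam < cconst b / real (max_degree V E)"
  shows "(1 + lam) powr b * ln (1 + lam) * real (degree V E u) \<le> 1/4"
proof -
  have "degree V E u \<le> max_degree V E"
    using assms(1,2) by (rule degree_le_max_degree)
  with assms(3) have "1 \<le> real (max_degree V E)"
    by simp
  with assms(6) have "lam * real (max_degree V E) < cconst b"
    by (simp add: pos_less_divide_eq)
  with assms(4,5) \<open>1 \<le> real (max_degree V E)\<close>
  have "(1 + lam) powr b * ln (1 + lam) * real (max_degree V E) \<le> 1/4"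
    by (rule cconst_bound)
  moreover have "0 \<le> (1 + lam) powr b * ln (1 + lam)"
    using \<open>0 < lam\<close> by simp
  ultimately show ?thesis
    using \<open>degree V E u \<le> max_degree V E\<close> by (meson mult_left_mono of_nat_mono order_trans)
qed

theorem mainTheorem8:
  fixes V :: "'a set" and E :: "'a \<Rightarrow> 'a \<Rightarrow> bool"
    and b lam :: real and x :: "'a \<Rightarrow> real"
  assumes G: "simple_graph V E"
    and no_isolated: "\<forall>u\<in>V. degree V E u \<ge> 1"
    and b: "b = 0 \<or> b \<ge> 1"
    and lam_pos: "0 < lam"
    and lam_lt: "lam < cconst b / real (max_degree V E)"
    and x_nonneg: "\<forall>u\<in>V. x u \<ge> 0"
    and x_feas: "\<forall>u\<in>V. betaval b lam (degree V E u) * x u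
        + gammaval b lam (degree V E u) * (\<Sum>v\<in>V. adj E u v * x v) \<ge> 1"
  shows "(\<Sum>u\<in>V. x u) \<ge> (\<Sum>u\<in>V. 1 / (betaval b lam (degree V E u)
            + real (degree V E u) * gammaval b lam (degree V E u)))"
proof -
  have fin: "finite V"
    using G by (simp add: simple_graph_def)
  have deg: "degree V E u \<noteq> 0" if "u \<in> V" for u
    using no_isolated that by fastforce
  define a where "a = (1 + lam) powr b * ln (1 + lam)"
  define w where "w u = lambertW (Dval b lam (degree V E u))" for u
  have D: "Dval b lam (degree V E u) = a * (\<Sum>v\<in>V. adj E u v)" for u
    using fin by (simp add: Dval_def a_def sum_adj_eq_degree)
  note D_pos = Dval_pos[where b = b, OF lam_pos deg]
  have "(\<Sum>u\<in>V. 1 / (betaval b lam (degree V E u) + real (degree V E u) * gammaval b lam (degree V E u)))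
      = (\<Sum>u\<in>V. exp (- w u)) / ((1 + lam) / lam)"
    unfolding sum_divide_distrib using one_div_betaval_add_gammaval[OF D_pos lam_pos]
    by (intro sum.cong) (simp_all add: w_def)
  also have "\<dots> \<le> (\<Sum>u\<in>V. x u)"
  proof (rule sum_exp_neg_div_le_of_feasible[where a = a, OF fin _ adj_nonneg])
    fix u assume "u \<in> V"
    show "a * (\<Sum>v\<in>V. adj E u v) \<le> 1/4"
      using degree_cconst_bound[OF fin \<open>u \<in> V\<close> _ b lam_pos lam_lt] no_isolated \<open>u \<in> V\<close>
      by (simp add: a_def sum_adj_eq_degree fin)
    show "w u = a * (\<Sum>v\<in>V. adj E u v) * exp (- w u)"
      using lambertW_eq_mult_exp_neg[OF D_pos[OF \<open>u \<in> V\<close>]] by (simp add: w_def D)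
    show "1 \<le> (1 + lam) / lam * exp (w u) / (1 + w u) * x u
        + (1 + lam) / lam * a / (1 + w u) * (\<Sum>v\<in>V. adj E u v * x v)"
      using x_feas[rule_format, OF \<open>u \<in> V\<close>]
      by (simp add: betaval_eq[OF D_pos[OF \<open>u \<in> V\<close>]] gammaval_eq[OF deg[OF \<open>u \<in> V\<close>]] w_def a_def)
  qed (use G lam_pos in \<open>simp_all add: adj_symmetric a_def\<close>)
  finally show ?thesis .
qed

end
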